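(* Let $\mathbf X\in\mathbb R^{n\times T}$, $k\le n$, and for $\mathbf W\in\mathbb R^{k\times n}$, $\mathbf M\in\mathbb R^{k\times k}$, $\mathbf Y\in\mathbb R^{k\times T}$ define $$L_{PSP}(\mathbf W,\mathbf M,\mathbf Y)=\mathrm{Tr}\Big(-\frac4T\mathbf X^\top\mathbf W^\top\mathbf Y+\frac2T\mathbf Y^\top\mathbf M\mathbf Y\Big)+2\mathrm{Tr}(\mathbf W^\top\mathbf W)-\mathrm{Tr}(\mathbf M^\top\mathbf M).$$ Then (a) for every $\mathbf Y$, $\min_{\mathbf W}\max_{\mathbf M}L_{PSP}(\mathbf W,\mathbf M,\mathbf Y)=\frac1{T^2}\|\mathbf X^\top\mathbf X-\mathbf Y^\top\mathbf Y\|_F^2-\frac1{T^2}\|\mathbf X^\top\mathbf X\|_F^2$, attained at $\mathbf W=\frac1T\mathbf Y\mathbf X^\top$, $\mathbf M=\frac1T\mathbf Y\mathbf Y^\top$; and (b) for every $\mathbf W$, $$\max_{\mathbf M}\min_{\mathbf Y}L_{PSP}(\mathbf W,\mathbf M,\mathbf Y)=\min_{\mathbf Y}\max_{\mathbf M}L_{PSP}(\mathbf W,\mathbf M,\mathbf Y)=\mathrm{Tr}\Big(-\frac3{T^{2/3}}(\mathbf W\mathbf X\mathbf X^\top\mathbf W^\top)^{2/3}+2\mathbf W\mathbf W^\top\Big).$$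
   Context: Matrix fractional powers of positive semidefinite matrices are defined via eigendecomposition; $\|\cdot\|_F$ is the Frobenius norm. *)

theory Defs
  imports "HOL-Analysis.Analysis"
begin

definition frob_norm :: "real^'c^'r \<Rightarrow> real" where
  "frob_norm A = sqrt (\<Sum>i\<in>UNIV. \<Sum>j\<in>UNIV. (A $ i $ j)^2)"

definition diag_mat :: "real^'n \<Rightarrow> real^'n^'n" where
  "diag_mat d = (\<chi> i j. if i = j then d $ i else 0)"

definition psd_powr :: "real^'n^'n \<Rightarrow> real \<Rightarrow> real^'n^'n" where
  "psd_powr A p = (SOME B. \<exists>U d. orthogonal_matrix U \<and> (\<forall>i. d $ i \<ge> 0) \<and>
      A = U ** diag_mat d ** transpose U \<and>
      B = U ** diag_mat (\<chi> i. (d $ i) powr p) ** transpose U)"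

text \<open>The PSP objective; X is n x T, W is k x n, M is k x k, Y is k x T, T = CARD('t).\<close>
definition L_PSP :: "real^'t^'n \<Rightarrow> real^'n^'k \<Rightarrow> real^'k^'k \<Rightarrow> real^'t^'k \<Rightarrow> real" where
  "L_PSP X W M Y =
     trace ((- (4 / real CARD('t))) *\<^sub>R (transpose X ** transpose W ** Y)
            + (2 / real CARD('t)) *\<^sub>R (transpose Y ** M ** Y))
     + 2 * trace (transpose W ** W) - trace (transpose M ** M)"

end

theory Submission
  imports Defs
begin

text \<open>
  Both claims reduce to completing squares. In the Frobenius inner product,
  \<open>L_PSP\<close> is a concave quadratic in \<open>M\<close> and a convex one in \<open>W\<close>, so (a) is two explicit
  optimisations. For (b) write \<open>W X X\<^sup>T W\<^sup>T = U diag(T r\<^sub>j\<^sup>3) U\<^sup>T\<close>. The candidate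
  \<open>Y = U diag(1/r\<^sub>j) U\<^sup>T W X\<close> gives \<open>max\<^sub>M L = 2\<parallel>W\<parallel>\<^sup>2 - 3 \<Sum> r\<^sub>j\<^sup>2\<close>, the value
  claimed; conversely, for the positive definite \<open>M = U diag(r\<^sub>j + \<epsilon>) U\<^sup>T\<close> minimising
  over \<open>Y\<close> by completing the square yields the same value up to \<open>O(\<epsilon>)\<close>. Weak
  duality closes the gap between max-min and min-max.
\<close>

section \<open>Spectral theorem for real symmetric matrices\<close>

lemma symmetric_matrix_inner_commute:
  fixes A :: "real^'n^'n"
  assumes "transpose A = A"
  shows "x \<bullet> (A *v y) = (A *v x) \<bullet> y"
  by (metis assms dot_lmul_matrix vector_transpose_matrix)

lemma rayleigh_maximizer_is_eigenvector:
  fixes A :: "real^'n^'n"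
  assumes sym: "transpose A = A" and S: "subspace S" and inv: "\<forall>x\<in>S. A *v x \<in> S"
    and bound: "\<forall>y\<in>S. y \<bullet> (A *v y) \<le> l * (y \<bullet> y)"
    and v: "v \<in> S" "v \<bullet> (A *v v) = l * (v \<bullet> v)"
  shows "A *v v = l *\<^sub>R v"
proof -
  define u where "u = A *v v - l *\<^sub>R v"
  define c where "c = u \<bullet> (A *v u) - l * (u \<bullet> u)"
  have uS: "u \<in> S" unfolding u_def using inv v S by (simp add: subspace_diff subspace_scale)
  have "u \<bullet> (A *v v) - l * (u \<bullet> v) = u \<bullet> u"
    by (simp add: u_def inner_diff_right)
  moreover have "v \<bullet> (A *v u) = u \<bullet> (A *v v)"
    using symmetric_matrix_inner_commute[OF sym] by (metis inner_commute)
  ultimately have expand: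
      "(v + t *\<^sub>R u) \<bullet> (A *v (v + t *\<^sub>R u)) - l * ((v + t *\<^sub>R u) \<bullet> (v + t *\<^sub>R u))
      = 2 * t * (u \<bullet> u) + t\<^sup>2 * c" for t
    using v(2) by (simp add: c_def matrix_vector_right_distrib matrix_vector_mult_scaleR inner_add_left
        inner_add_right inner_commute power2_eq_square algebra_simps)
  have le: "2 * t * (u \<bullet> u) + t\<^sup>2 * c \<le> 0" for t
  proof -
    have "v + t *\<^sub>R u \<in> S" using uS v(1) S by (simp add: subspace_add subspace_scale)
    with bound expand[of t] show ?thesis by force
  qed
  show ?thesis
  proof (rule ccontr)
    assume "A *v v \<noteq> l *\<^sub>R v"
    hence pos: "u \<bullet> u > 0" by (simp add: u_def)
    define t where "t = (u \<bullet> u) / (\<bar>c\<bar> + 1)"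
    have tp: "t > 0" using pos by (simp add: t_def)
    have "t * (2 * (u \<bullet> u) + t * c) \<le> 0" using le[of t] by (simp add: power2_eq_square algebra_simps)
    hence "2 * (u \<bullet> u) \<le> - t * c" using tp by (simp add: mult_le_0_iff)
    also have "\<dots> \<le> t * \<bar>c\<bar>" using tp by (simp add: abs_if)
    also have "\<dots> < t * (\<bar>c\<bar> + 1)" using tp by simp
    also have "\<dots> = u \<bullet> u" by (simp add: t_def)
    finally show False using pos by simp
  qed
qed

lemma symmetric_matrix_has_eigenvector:
  fixes A :: "real^'n^'n"
  assumes sym: "transpose A = A" and S: "subspace S" "S \<noteq> {0}" and inv: "\<forall>x\<in>S. A *v x \<in> S"
  obtains v where "v \<in> S" "norm v = 1" "A *v v = (v \<bullet> (A *v v)) *\<^sub>R v"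
proof -
  let ?K = "S \<inter> sphere 0 1"
  have "compact ?K"
    using closed_Int_compact[OF closed_subspace[OF S(1)] compact_sphere] by simp
  moreover obtain x where x: "x \<in> S" "x \<noteq> 0" using S subspace_0 by blast
  then have "x /\<^sub>R norm x \<in> ?K" using S(1) by (simp add: subspace_scale)
  moreover have "continuous_on ?K (\<lambda>x. x \<bullet> (A *v x))"
    by (intro continuous_intros linear_continuous_on linear_linear[THEN iffD1] matrix_vector_mul_linear)
  ultimately obtain v where v: "v \<in> ?K" and vmax: "\<forall>y\<in>?K. y \<bullet> (A *v y) \<le> v \<bullet> (A *v v)"
    using continuous_attains_sup[of ?K] by blast
  have vv: "v \<bullet> v = 1" using v by (simp add: dot_square_norm)
  have "y \<bullet> (A *v y) \<le> (v \<bullet> (A *v v)) * (y \<bullet> y)" if y: "y \<in> S" for y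
  proof (cases "y = 0")
    case False
    have "y /\<^sub>R norm y \<in> ?K" using y False S(1) by (simp add: subspace_scale)
    with vmax have "(y /\<^sub>R norm y) \<bullet> (A *v (y /\<^sub>R norm y)) \<le> v \<bullet> (A *v v)" by blast
    moreover have "(y /\<^sub>R norm y) \<bullet> (A *v (y /\<^sub>R norm y)) = (y \<bullet> (A *v y)) / (norm y)\<^sup>2"
      by (simp add: matrix_vector_mult_scaleR power2_eq_square field_simps)
    ultimately show ?thesis using False by (simp add: divide_le_eq dot_square_norm mult.commute)
  qed simp
  with rayleigh_maximizer_is_eigenvector[OF sym S(1) inv] v vv have "A *v v = (v \<bullet> (A *v v)) *\<^sub>R v"
    by auto
  with v that show ?thesis by auto
qed

lemma symmetric_matrix_orthonormal_eigenbasis: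
  fixes A :: "real^'n^'n"
  assumes sym: "transpose A = A"
  shows "subspace S \<Longrightarrow> \<forall>x\<in>S. A *v x \<in> S \<Longrightarrow>
    \<exists>B. B \<subseteq> S \<and> finite B \<and> pairwise orthogonal B \<and> span B = S \<and>
        (\<forall>b\<in>B. norm b = 1 \<and> (\<exists>l. A *v b = l *\<^sub>R b))"
proof (induction "dim S" arbitrary: S rule: less_induct)
  case less
  show ?case
  proof (cases "S = {0}")
    case True
    then show ?thesis by (intro exI[of _ "{}"]) (simp add: span_empty)
  next
    case False
    obtain v where v: "v \<in> S" "norm v = 1" "A *v v = (v \<bullet> (A *v v)) *\<^sub>R v"
      using symmetric_matrix_has_eigenvector[OF sym less.prems(1) False less.prems(2)] by blast
    define S' where "S' = S \<inter> {y. orthogonal v y}"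
    have sub': "subspace S'"
      unfolding S'_def using less.prems(1) by (intro subspace_inter subspace_orthogonal_to_vector)
    have inv': "\<forall>x\<in>S'. A *v x \<in> S'"
    proof
      fix x assume x: "x \<in> S'"
      have "v \<bullet> (A *v x) = (A *v v) \<bullet> x" by (rule symmetric_matrix_inner_commute[OF sym])
      also have "\<dots> = (v \<bullet> (A *v v)) * (v \<bullet> x)" by (subst v(3)) simp
      finally have "v \<bullet> (A *v x) = (v \<bullet> (A *v v)) * (v \<bullet> x)" .
      with x less.prems(2) show "A *v x \<in> S'" by (simp add: S'_def orthogonal_def)
    qed
    have "v \<notin> S'" using v(2) by (auto simp: S'_def orthogonal_def)
    with v(1) have "S' \<subset> S" by (auto simp: S'_def)
    hence "dim S' < dim S" using sub' less.prems(1) by (simp add: dim_psubset span_eq_iff[THEN iffD2])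
    then obtain B where B: "B \<subseteq> S'" "finite B" "pairwise orthogonal B" "span B = S'"
      "\<forall>b\<in>B. norm b = 1 \<and> (\<exists>l. A *v b = l *\<^sub>R b)"
      using less.hyps[OF _ sub' inv'] by blast
    show ?thesis
    proof (intro exI[of _ "insert v B"] conjI)
      show "insert v B \<subseteq> S" using B(1) v(1) by (auto simp: S'_def)
      show "pairwise orthogonal (insert v B)"
        using B(1,3) by (auto simp: pairwise_insert S'_def orthogonal_commute)
      have "x \<in> span (insert v B)" if x: "x \<in> S" for x
      proof -
        have "x - (v \<bullet> x) *\<^sub>R v \<in> S'"
          using x v less.prems(1) by (simp add: S'_def orthogonal_def subspace_diff subspace_scale
              inner_diff_right dot_square_norm)
        thus ?thesis using B(4) span_breakdown_eq by blast
      qed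
      then show "span (insert v B) = S"
        using \<open>insert v B \<subseteq> S\<close> less.prems(1) span_minimal span_superset by blast
    qed (use B v in auto)
  qed
qed

lemma symmetric_matrix_diagonalizable:
  fixes A :: "real^'n^'n"
  assumes sym: "transpose A = A"
  obtains U d where "orthogonal_matrix U" "A = U ** diag_mat d ** transpose U"
proof -
  obtain B where B: "finite B" "pairwise orthogonal B" "span B = UNIV"
    "\<forall>b\<in>B. norm b = 1 \<and> (\<exists>l. A *v b = l *\<^sub>R b)"
    using symmetric_matrix_orthonormal_eigenbasis[OF sym, of UNIV] by auto
  have "independent B" using B(2,4) pairwise_orthogonal_independent by force
  hence "card B = CARD('n)" using dim_span_eq_card_independent B(3) by fastforce
  then obtain h where h: "bij_betw h (UNIV :: 'n set) B"
    using finite_same_card_bij[OF finite[of UNIV] B(1)] by auto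
  have hB: "h j \<in> B" for j using h by (auto simp: bij_betw_def)
  define d :: "real^'n" where "d = (\<chi> j. SOME l. A *v h j = l *\<^sub>R h j)"
  have hd: "A *v h j = (d $ j) *\<^sub>R h j" for j
    unfolding d_def using B(4) hB[of j] by (auto intro: someI_ex)
  have hh: "h i \<bullet> h j = (if i = j then 1 else 0)" for i j
  proof (cases "i = j")
    case False
    hence "h i \<noteq> h j" using h by (auto simp: bij_betw_def inj_on_def)
    then show ?thesis using False B(2) hB unfolding pairwise_def orthogonal_def by simp
  qed (use B(4) hB in \<open>simp add: dot_square_norm\<close>)
  define U :: "real^'n^'n" where "U = (\<chi> i j. h j $ i)"
  have "transpose U ** U = mat 1"
    using hh by (simp add: vec_eq_iff U_def matrix_matrix_mult_def transpose_def inner_vec_def mat_def)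
  hence orth: "orthogonal_matrix U" by (simp add: orthogonal_matrix)
  have AU: "A ** U = U ** diag_mat d"
  proof -
    have "(A ** U) $ i $ j = (A *v h j) $ i" for i j
      by (simp add: U_def matrix_matrix_mult_def matrix_vector_mult_def)
    thus ?thesis
      by (simp add: vec_eq_iff hd U_def matrix_matrix_mult_def diag_mat_def if_distrib mult.commute
          cong: if_cong)
  qed
  have "A = A ** (U ** transpose U)" using orth by (simp add: orthogonal_matrix_def)
  also have "\<dots> = U ** diag_mat d ** transpose U" by (simp add: matrix_mul_assoc AU)
  finally show ?thesis using that orth by blast
qed

lemma trace_scaleR: "trace (c *\<^sub>R (A :: real^'n^'n)) = c * trace A"
  by (simp add: trace_def sum_distrib_left)

lemma trace_transpose_mult: "trace (transpose (A :: real^'c^'r) ** B) = A \<bullet> B"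
  by (simp add: trace_def matrix_matrix_mult_def transpose_def inner_vec_def sum.swap[of _ "UNIV :: 'c set"])

lemma frob_norm_square: "(frob_norm A)\<^sup>2 = A \<bullet> A"
proof -
  have "(\<Sum>i\<in>UNIV. \<Sum>j\<in>UNIV. (A $ i $ j)\<^sup>2) \<ge> 0" by (intro sum_nonneg) simp
  thus ?thesis by (simp add: frob_norm_def inner_vec_def power2_eq_square)
qed

lemma inner_matrix_mult_right: "(C :: real^'c^'r) \<bullet> (A ** B) = (transpose A ** C) \<bullet> B"
proof -
  have "C \<bullet> (A ** B) = trace (transpose (transpose A ** C) ** B)"
    by (simp add: trace_transpose_mult[symmetric] matrix_transpose_mul matrix_mul_assoc)
  thus ?thesis by (simp add: trace_transpose_mult)
qed

lemma inner_matrix_mult_left: "((A :: real^'m^'r) ** B) \<bullet> (C :: real^'c^'r) = A \<bullet> (C ** transpose B)"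
proof -
  have "(A ** B) \<bullet> C = trace (transpose B ** (transpose A ** C))"
    by (simp add: trace_transpose_mult[symmetric] matrix_transpose_mul matrix_mul_assoc)
  also have "\<dots> = trace ((transpose A ** C) ** transpose B)" by (rule trace_mul_sym)
  finally show ?thesis by (simp add: trace_transpose_mult[symmetric] matrix_mul_assoc)
qed

lemma inner_mult_self_eq_trace: "(G :: real^'c^'r) \<bullet> (N ** G) = trace (N ** (G ** transpose G))"
proof -
  have "G \<bullet> (N ** G) = trace ((N ** G) ** transpose G)"
    by (simp add: trace_transpose_mult[symmetric] trace_mul_sym[of "transpose G"])
  thus ?thesis by (simp add: matrix_mul_assoc)
qed

lemma inner_gram_gram:
  "(transpose A ** A) \<bullet> (transpose B ** B) = (B ** transpose A) \<bullet> (B ** (transpose A :: real^'r^'c))"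
proof -
  have "(transpose A ** A) \<bullet> (transpose B ** B) = trace (transpose A ** (A ** transpose B ** B))"
    by (simp add: trace_transpose_mult[symmetric] matrix_transpose_mul matrix_mul_assoc)
  also have "\<dots> = trace ((A ** transpose B ** B) ** transpose A)" by (rule trace_mul_sym)
  also have "\<dots> = (B ** transpose A) \<bullet> (B ** transpose A)"
    by (simp add: trace_transpose_mult[symmetric] matrix_transpose_mul matrix_mul_assoc)
  finally show ?thesis .
qed

lemma diag_mat_mult: "diag_mat (a :: real^'n) ** diag_mat b = diag_mat (\<chi> i. a $ i * b $ i)"
proof -
  have "(\<Sum>k\<in>UNIV. (if i = k then a $ i else 0) * (if k = j then b $ k else 0))
     = (if i = j then a $ i * b $ i else 0)" for i j :: 'n
    by (simp add: if_distrib[of "\<lambda>x. x * _"] cong: if_cong)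
  thus ?thesis by (simp add: vec_eq_iff diag_mat_def matrix_matrix_mult_def)
qed

lemma transpose_diag_mat [simp]: "transpose (diag_mat a) = diag_mat a"
  by (simp add: vec_eq_iff diag_mat_def transpose_def)

lemma diag_mat_one: "diag_mat (\<chi> i. 1) = mat 1"
  by (simp add: vec_eq_iff diag_mat_def mat_def)

lemma trace_diag_mat: "trace (diag_mat a) = (\<Sum>i\<in>UNIV. a $ i)"
  by (simp add: trace_def diag_mat_def)

lemma diag_mat_mult_rows: "diag_mat m ** N = (\<chi> i. m $ i *\<^sub>R N $ i)"
  by (simp add: vec_eq_iff diag_mat_def matrix_matrix_mult_def if_distrib[of "\<lambda>x. x * _"]
      cong: if_cong)

lemma orthogonal_conj_diag_mult:
  assumes "orthogonal_matrix U"
  shows "(U ** diag_mat a ** transpose U) ** (U ** diag_mat b ** transpose U)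
    = U ** diag_mat (\<chi> i. a $ i * b $ i) ** transpose U"
proof -
  have "(U ** diag_mat a ** transpose U) ** (U ** diag_mat b ** transpose U)
      = U ** diag_mat a ** (transpose U ** U) ** diag_mat b ** transpose U"
    by (simp add: matrix_mul_assoc)
  also have "\<dots> = U ** (diag_mat a ** diag_mat b) ** transpose U"
    using assms by (simp add: orthogonal_matrix_def matrix_mul_assoc)
  finally show ?thesis by (simp add: diag_mat_mult)
qed

lemma transpose_conj_diag: "transpose (U ** diag_mat a ** transpose U) = U ** diag_mat a ** transpose U"
  by (simp add: matrix_transpose_mul matrix_mul_assoc)

lemma trace_orthogonal_conj_diag:
  assumes "orthogonal_matrix U"
  shows "trace (U ** diag_mat a ** transpose U) = (\<Sum>i\<in>UNIV. a $ i)"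
proof -
  have "trace (U ** (diag_mat a ** transpose U)) = trace ((diag_mat a ** transpose U) ** U)"
    by (rule trace_mul_sym)
  also have "\<dots> = trace (diag_mat a)"
    using assms by (simp add: orthogonal_matrix_def matrix_mul_assoc[symmetric])
  finally show ?thesis by (simp add: matrix_mul_assoc trace_diag_mat)
qed

lemma inner_conj_diag_nonneg:
  assumes "\<forall>i. 0 \<le> m $ i"
  shows "0 \<le> Z \<bullet> ((U ** diag_mat m ** transpose U) ** Z)"
proof -
  have "(U ** diag_mat m ** transpose U) ** Z = U ** (diag_mat m ** (transpose U ** Z))"
    by (simp add: matrix_mul_assoc)
  hence "Z \<bullet> ((U ** diag_mat m ** transpose U) ** Z)
      = (transpose U ** Z) \<bullet> (diag_mat m ** (transpose U ** Z))"
    by (simp only: inner_matrix_mult_right)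
  also have "\<dots> \<ge> 0"
    using assms by (auto simp: diag_mat_mult_rows inner_vec_def mult.left_commute intro!: sum_nonneg)
  finally show ?thesis .
qed

text \<open>Completing the square: \<open>Y\<bullet>MY - 2G\<bullet>Y + G\<bullet>NG = (Y - NG)\<bullet>M(Y - NG)\<close>.\<close>
lemma quadratic_form_completion_lower_bound:
  fixes M N :: "real^'k^'k" and G Y :: "real^'t^'k"
  assumes sym: "transpose M = M" and inv: "M ** N = mat 1" and psd: "\<And>Z :: real^'t^'k. 0 \<le> Z \<bullet> (M ** Z)"
  shows "- (G \<bullet> (N ** G)) \<le> Y \<bullet> (M ** Y) - 2 * (G \<bullet> Y)"
proof -
  have MNG: "M ** (N ** G) = G" by (simp add: matrix_mul_assoc inv)
  have "(N ** G) \<bullet> (M ** Y) = G \<bullet> Y"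
    by (simp add: inner_commute[of _ "M ** Y"] inner_matrix_mult_right sym MNG)
  moreover have "M ** (Y - N ** G) = M ** Y - G"
    using matrix_add_ldistrib[of M "Y - N ** G" "N ** G"] MNG by simp
  ultimately have "(Y - N ** G) \<bullet> (M ** (Y - N ** G)) = Y \<bullet> (M ** Y) - 2 * (G \<bullet> Y) + G \<bullet> (N ** G)"
    by (simp add: inner_diff_left inner_diff_right inner_commute)
  with psd[of "Y - N ** G"] show ?thesis by simp
qed

lemma gram_matrix_diagonalizable:
  fixes G :: "real^'t^'k"
  obtains U d where "orthogonal_matrix U" "\<forall>i. 0 \<le> d $ i"
    "G ** transpose G = U ** diag_mat d ** transpose U"
proof -
  have "transpose (G ** transpose G) = G ** transpose G" by (simp add: matrix_transpose_mul)
  then obtain U d where U: "orthogonal_matrix U" and C: "G ** transpose G = U ** diag_mat d ** transpose U"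
    by (rule symmetric_matrix_diagonalizable)
  have "diag_mat d = (transpose U ** U) ** diag_mat d ** (transpose U ** U)"
    using U by (simp add: orthogonal_matrix_def)
  also have "\<dots> = transpose U ** (G ** transpose G) ** U" by (simp add: C matrix_mul_assoc)
  also have "\<dots> = (transpose U ** G) ** transpose (transpose U ** G)"
    by (simp add: matrix_transpose_mul matrix_mul_assoc)
  finally have D: "diag_mat d = (transpose U ** G) ** transpose (transpose U ** G)" .
  have "0 \<le> d $ i" for i
  proof -
    have "d $ i = diag_mat d $ i $ i" by (simp add: diag_mat_def)
    also have "\<dots> = (\<Sum>k\<in>UNIV. ((transpose U ** G) $ i $ k)\<^sup>2)"
      unfolding D by (simp add: matrix_matrix_mult_def transpose_def power2_eq_square)
    finally show ?thesis by (simp add: sum_nonneg)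
  qed
  with U C that show ?thesis by blast
qed

lemma psd_powr_gram_matrix:
  fixes G :: "real^'t^'k"
  obtains U d where "orthogonal_matrix U" "\<forall>i. 0 \<le> d $ i"
    "G ** transpose G = U ** diag_mat d ** transpose U"
    "psd_powr (G ** transpose G) p = U ** diag_mat (\<chi> i. d $ i powr p) ** transpose U"
proof -
  obtain U d where "orthogonal_matrix U" "\<forall>i. 0 \<le> d $ i" "G ** transpose G = U ** diag_mat d ** transpose U"
    by (rule gram_matrix_diagonalizable)
  hence "\<exists>B U d. orthogonal_matrix U \<and> (\<forall>i. 0 \<le> d $ i)
      \<and> G ** transpose G = U ** diag_mat d ** transpose U
      \<and> B = U ** diag_mat (\<chi> i. d $ i powr p) ** transpose U" by blast
  from someI_ex[OF this] that show ?thesis unfolding psd_powr_def by blast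
qed

section \<open>Extrema of quadratic functions\<close>

lemma SUP_ereal_eq_max:
  assumes "\<And>x. f x \<le> a" "f x0 = a"
  shows "(SUP x. ereal (f x)) = ereal a"
  by (rule antisym) (auto intro!: SUP_least SUP_upper2[where i = x0] simp: assms)

lemma INF_ereal_eq_min:
  assumes "\<And>x. a \<le> f x" "f x0 = a"
  shows "(INF x. ereal (f x)) = ereal a"
  by (rule antisym) (auto intro!: INF_greatest INF_lower2[where i = x0] simp: assms)

lemma SUP_INF_le_INF_SUP: "(SUP x. INF y. F x y) \<le> (INF y. SUP x. F x y :: 'c :: complete_lattice)"
  by (intro SUP_least INF_greatest) (meson INF_lower SUP_upper UNIV_I order_trans)

lemma SUP_concave_quadratic:
  fixes p :: "'a :: real_inner"
  assumes "a > 0"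
  shows "(SUP x. ereal (c + s * (x \<bullet> p) - a * (x \<bullet> x))) = ereal (c + s\<^sup>2 / (4 * a) * (p \<bullet> p))"
proof (rule SUP_ereal_eq_max)
  fix x
  let ?z = "x - (s / (2 * a)) *\<^sub>R p"
  have "0 \<le> a * (?z \<bullet> ?z)" using assms by simp
  also have "\<dots> = a * (x \<bullet> x) - s * (x \<bullet> p) + s\<^sup>2 / (4 * a) * (p \<bullet> p)"
    using assms by (simp add: inner_diff_left inner_diff_right inner_commute power2_eq_square field_simps)
  finally show "c + s * (x \<bullet> p) - a * (x \<bullet> x) \<le> c + s\<^sup>2 / (4 * a) * (p \<bullet> p)" by simp
next
  show "c + s * (((s / (2 * a)) *\<^sub>R p) \<bullet> p) - a * (((s / (2 * a)) *\<^sub>R p) \<bullet> ((s / (2 * a)) *\<^sub>R p))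
      = c + s\<^sup>2 / (4 * a) * (p \<bullet> p)"
    using assms by (simp add: power2_eq_square field_simps)
qed

lemma INF_convex_quadratic:
  fixes q :: "'a :: real_inner"
  assumes "a > 0"
  shows "(INF x. ereal (c + a * (x \<bullet> x) - s * (x \<bullet> q))) = ereal (c - s\<^sup>2 / (4 * a) * (q \<bullet> q))"
proof (rule INF_ereal_eq_min)
  fix x
  let ?z = "x - (s / (2 * a)) *\<^sub>R q"
  have "0 \<le> a * (?z \<bullet> ?z)" using assms by simp
  also have "\<dots> = a * (x \<bullet> x) - s * (x \<bullet> q) + s\<^sup>2 / (4 * a) * (q \<bullet> q)"
    using assms by (simp add: inner_diff_left inner_diff_right inner_commute power2_eq_square field_simps)
  finally show "c - s\<^sup>2 / (4 * a) * (q \<bullet> q) \<le> c + a * (x \<bullet> x) - s * (x \<bullet> q)" by simp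
next
  show "c + a * (((s / (2 * a)) *\<^sub>R q) \<bullet> ((s / (2 * a)) *\<^sub>R q)) - s * (((s / (2 * a)) *\<^sub>R q) \<bullet> q)
      = c - s\<^sup>2 / (4 * a) * (q \<bullet> q)"
    using assms by (simp add: power2_eq_square field_simps)
qed

lemma ereal_le_of_vanishing_defect:
  fixes S :: ereal and f :: "real \<Rightarrow> real"
  assumes "(f \<longlongrightarrow> 0) (at_right 0)" and "\<And>e. e > 0 \<Longrightarrow> ereal (v - f e) \<le> S"
  shows "ereal v \<le> S"
proof (rule tendsto_upperbound)
  show "((\<lambda>e. ereal (v - f e)) \<longlongrightarrow> ereal v) (at_right 0)"
    using tendsto_diff[OF tendsto_const assms(1), of v] by (simp add: tendsto_ereal)
  show "\<forall>\<^sub>F e in at_right 0. ereal (v - f e) \<le> S"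
    using eventually_at_right_less[of "0 :: real"] by (auto elim!: eventually_mono intro: assms(2))
qed simp

section \<open>The PSP objective\<close>

lemma L_PSP_inner_form:
  fixes X :: "real^'t^'n"
  shows "L_PSP X W M Y = 2 * (W \<bullet> W) - (4 / real CARD('t)) * ((W ** X) \<bullet> Y)
    + (2 / real CARD('t)) * (M \<bullet> (Y ** transpose Y)) - M \<bullet> M"
proof -
  have "trace (transpose X ** transpose W ** Y) = (W ** X) \<bullet> Y"
    by (simp add: trace_transpose_mult[symmetric] matrix_transpose_mul)
  moreover have "trace (transpose Y ** M ** Y) = M \<bullet> (Y ** transpose Y)"
    by (simp add: trace_transpose_mult matrix_mul_assoc[symmetric] inner_commute[of Y]
        inner_matrix_mult_left)
  ultimately show ?thesis
    by (simp add: L_PSP_def trace_add trace_sub trace_scaleR trace_transpose_mult)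
qed

lemma SUP_L_PSP:
  fixes X :: "real^'t^'n"
  shows "(SUP M. ereal (L_PSP X W M Y)) = ereal (2 * (W \<bullet> W) - (4 / real CARD('t)) * ((W ** X) \<bullet> Y)
    + ((Y ** transpose Y) \<bullet> (Y ** transpose Y)) / (real CARD('t))\<^sup>2)"
  using SUP_concave_quadratic[of 1 "2 * (W \<bullet> W) - (4 / real CARD('t)) * ((W ** X) \<bullet> Y)"
      "2 / real CARD('t)" "Y ** transpose Y"]
  by (simp add: L_PSP_inner_form power2_eq_square algebra_simps)

lemma PSP_minimax_given_Y:
  fixes X :: "real^'t^'n" and Y :: "real^'t^'k"
  shows "let v = (1 / real CARD('t)^2) * (frob_norm (transpose X ** X - transpose Y ** Y))^2
                - (1 / real CARD('t)^2) * (frob_norm (transpose X ** X))^2;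
            W0 = (1 / real CARD('t)) *\<^sub>R (Y ** transpose X);
            M0 = (1 / real CARD('t)) *\<^sub>R (Y ** transpose Y)
        in (INF W :: real^'n^'k. SUP M :: real^'k^'k. ereal (L_PSP X W M Y)) = ereal v
           \<and> (SUP M :: real^'k^'k. ereal (L_PSP X W0 M Y)) = ereal v
           \<and> L_PSP X W0 M0 Y = v"
proof -
  define t where "t = real CARD('t)"
  define Q where "Q = Y ** transpose X"
  define P where "P = Y ** transpose Y"
  have WX: "(W ** X) \<bullet> Y = W \<bullet> Q" for W :: "real^'n^'k"
    by (simp add: Q_def inner_matrix_mult_left)
  have "(frob_norm (transpose X ** X - transpose Y ** Y))\<^sup>2 - (frob_norm (transpose X ** X))\<^sup>2
      = (transpose Y ** Y) \<bullet> (transpose Y ** Y) - 2 * ((transpose X ** X) \<bullet> (transpose Y ** Y))"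
    by (simp add: frob_norm_square inner_diff_left inner_diff_right inner_commute)
  also have "\<dots> = P \<bullet> P - 2 * (Q \<bullet> Q)"
    by (simp only: P_def Q_def inner_gram_gram)
  finally have E: "(frob_norm (transpose X ** X - transpose Y ** Y))\<^sup>2 - (frob_norm (transpose X ** X))\<^sup>2
      = P \<bullet> P - 2 * (Q \<bullet> Q)" .
  have v: "(1 / t\<^sup>2) * (frob_norm (transpose X ** X - transpose Y ** Y))\<^sup>2
      - (1 / t\<^sup>2) * (frob_norm (transpose X ** X))\<^sup>2 = (P \<bullet> P - 2 * (Q \<bullet> Q)) / t\<^sup>2"
    unfolding right_diff_distrib[symmetric] using E by simp
  have SUP_M: "(SUP M. ereal (L_PSP X W M Y)) = ereal (P \<bullet> P / t\<^sup>2 + 2 * (W \<bullet> W) - (4 / t) * (W \<bullet> Q))"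
    for W :: "real^'n^'k"
    by (simp add: SUP_L_PSP WX P_def t_def)
  have "(INF W :: real^'n^'k. SUP M :: real^'k^'k. ereal (L_PSP X W M Y))
      = ereal ((P \<bullet> P - 2 * (Q \<bullet> Q)) / t\<^sup>2)"
    using INF_convex_quadratic[of 2 "P \<bullet> P / t\<^sup>2" "4 / t" Q] by (simp add: SUP_M power2_eq_square diff_divide_distrib)
  moreover have "(SUP M :: real^'k^'k. ereal (L_PSP X ((1 / t) *\<^sub>R Q) M Y))
      = ereal ((P \<bullet> P - 2 * (Q \<bullet> Q)) / t\<^sup>2)"
    by (simp add: SUP_M power2_eq_square diff_divide_distrib)
  moreover have "L_PSP X ((1 / t) *\<^sub>R Q) ((1 / t) *\<^sub>R P) Y = (P \<bullet> P - 2 * (Q \<bullet> Q)) / t\<^sup>2"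
    by (simp add: L_PSP_inner_form WX power2_eq_square diff_divide_distrib flip: P_def t_def)
  ultimately show ?thesis using v by (simp add: Let_def P_def Q_def t_def)
qed

lemma cube_powr_one_third: "0 \<le> (x :: real) \<Longrightarrow> (x powr (1/3)) ^ 3 = x"
  by (simp add: powr_numeral[symmetric] powr_powr)

lemma cube_over_shift_bound:
  fixes r e :: real
  assumes "0 \<le> r" "0 < e"
  shows "2 * r ^ 3 / (r + e) + (r + e)\<^sup>2 \<le> 3 * r\<^sup>2 + e * (2 * r + e)"
proof -
  have "r ^ 3 \<le> r\<^sup>2 * (r + e)" using assms by (simp add: power2_eq_square power3_eq_cube algebra_simps)
  hence "2 * r ^ 3 / (r + e) \<le> 2 * r\<^sup>2" using assms by (simp add: divide_le_eq)
  thus ?thesis by (simp add: power2_eq_square algebra_simps)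
qed

context
  fixes X :: "real^'t^'n" and W :: "real^'n^'k" and U :: "real^'k^'k" and r :: "real^'k"
  assumes U: "orthogonal_matrix U" and r_nonneg: "\<And>j. 0 \<le> r $ j"
    and gram: "(W ** X) ** transpose (W ** X) = U ** diag_mat (\<chi> j. real CARD('t) * r $ j ^ 3) ** transpose U"
begin

lemma PSP_INF_SUP_le:
  "(INF Y. SUP M. ereal (L_PSP X W M Y)) \<le> ereal (2 * (W \<bullet> W) - 3 * (\<Sum>j\<in>UNIV. (r $ j)\<^sup>2))"
proof -
  define t where "t = real CARD('t)"
  define G where "G = W ** X"
  \<comment> \<open>\<open>inverse 0 = 0\<close>: \<open>A\<close> is the pseudo-inverse of \<open>U diag(r) U\<^sup>T\<close>.\<close>
  define A where "A = U ** diag_mat (\<chi> j. inverse (r $ j)) ** transpose U"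
  define Y where "Y = A ** G"
  have inverse_cube: "inverse x * x ^ 3 = x\<^sup>2" for x :: real
    by (cases "x = 0") (simp_all add: power2_eq_square power3_eq_cube)
  have GY: "G \<bullet> Y = t * (\<Sum>j\<in>UNIV. (r $ j)\<^sup>2)"
  proof -
    have "G \<bullet> Y = trace (A ** (G ** transpose G))" by (simp add: Y_def inner_mult_self_eq_trace)
    also have "\<dots> = (\<Sum>j\<in>UNIV. inverse (r $ j) * (t * r $ j ^ 3))"
      by (simp add: A_def G_def gram orthogonal_conj_diag_mult[OF U] trace_orthogonal_conj_diag[OF U] t_def)
    also have "\<dots> = t * (\<Sum>j\<in>UNIV. (r $ j)\<^sup>2)"
      by (simp add: sum_distrib_left mult.left_commute inverse_cube)
    finally show ?thesis .
  qed
  have YY: "Y ** transpose Y = U ** diag_mat (\<chi> j. t * r $ j) ** transpose U"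
  proof -
    have "Y ** transpose Y = A ** (G ** transpose G) ** A"
      by (simp add: Y_def A_def matrix_transpose_mul matrix_mul_assoc transpose_conj_diag)
    also have "\<dots> = U ** diag_mat (\<chi> j. inverse (r $ j) * (t * r $ j ^ 3) * inverse (r $ j)) ** transpose U"
      by (simp add: A_def G_def gram orthogonal_conj_diag_mult[OF U] t_def)
    also have "(\<chi> j. inverse (r $ j) * (t * r $ j ^ 3) * inverse (r $ j)) = (\<chi> j. t * r $ j)"
      by (auto simp: vec_eq_iff mult.commute mult.left_commute inverse_cube power2_eq_square
          dest: right_inverse)
    finally show ?thesis .
  qed
  have "(Y ** transpose Y) \<bullet> (Y ** transpose Y) = trace ((Y ** transpose Y) ** (Y ** transpose Y))"
    by (simp add: trace_transpose_mult[symmetric] matrix_transpose_mul)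
  also have "\<dots> = t\<^sup>2 * (\<Sum>j\<in>UNIV. (r $ j)\<^sup>2)"
    by (simp add: YY orthogonal_conj_diag_mult[OF U] trace_orthogonal_conj_diag[OF U] sum_distrib_left
        power2_eq_square algebra_simps)
  finally have "(SUP M. ereal (L_PSP X W M Y)) = ereal (2 * (W \<bullet> W) - 3 * (\<Sum>j\<in>UNIV. (r $ j)\<^sup>2))"
    by (simp add: SUP_L_PSP GY t_def flip: G_def)
  thus ?thesis by (metis INF_lower UNIV_I)
qed

lemma PSP_SUP_INF_ge:
  "ereal (2 * (W \<bullet> W) - 3 * (\<Sum>j\<in>UNIV. (r $ j)\<^sup>2)) \<le> (SUP M. INF Y. ereal (L_PSP X W M Y))"
proof (rule ereal_le_of_vanishing_defect)
  show "((\<lambda>e. \<Sum>j\<in>UNIV. e * (2 * r $ j + e)) \<longlongrightarrow> 0) (at_right 0)"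
    by (rule tendsto_eq_intros refl | simp)+
next
  fix e :: real assume e: "0 < e"
  define t where "t = real CARD('t)"
  define G where "G = W ** X"
  define m where "m = (\<chi> j. r $ j + e)"
  define M where "M = U ** diag_mat m ** transpose U"
  define N where "N = U ** diag_mat (\<chi> j. inverse (m $ j)) ** transpose U"
  have m: "0 < m $ j" for j using r_nonneg[of j] e by (simp add: m_def)
  have M_sym: "transpose M = M" by (simp add: M_def transpose_conj_diag)
  have "M ** N = U ** diag_mat (\<chi> j. 1) ** transpose U"
    using m by (simp add: M_def N_def orthogonal_conj_diag_mult[OF U] less_imp_neq[symmetric])
  hence MN: "M ** N = mat 1" using U by (simp add: diag_mat_one orthogonal_matrix_def)
  have psd: "0 \<le> Z \<bullet> (M ** Z)" for Z :: "real^'t^'k"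
    unfolding M_def using m by (intro inner_conj_diag_nonneg) (simp add: less_imp_le)
  have GNG: "G \<bullet> (N ** G) = t * (\<Sum>j\<in>UNIV. r $ j ^ 3 / (r $ j + e))"
    by (simp add: inner_mult_self_eq_trace G_def gram N_def orthogonal_conj_diag_mult[OF U]
        trace_orthogonal_conj_diag[OF U] sum_distrib_left m_def t_def field_simps)
  have MM: "M \<bullet> M = (\<Sum>j\<in>UNIV. (r $ j + e)\<^sup>2)"
    by (simp add: trace_transpose_mult[symmetric] M_sym)
      (simp add: M_def orthogonal_conj_diag_mult[OF U] trace_orthogonal_conj_diag[OF U] m_def power2_eq_square)
  have "2 * (W \<bullet> W) - 3 * (\<Sum>j\<in>UNIV. (r $ j)\<^sup>2) - (\<Sum>j\<in>UNIV. e * (2 * r $ j + e))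
      \<le> L_PSP X W M Y" for Y
  proof -
    have "(\<Sum>j\<in>UNIV. 2 * r $ j ^ 3 / (r $ j + e) + (r $ j + e)\<^sup>2)
        \<le> (\<Sum>j\<in>UNIV. 3 * (r $ j)\<^sup>2 + e * (2 * r $ j + e))"
      using cube_over_shift_bound r_nonneg e by (intro sum_mono) auto
    hence "2 * (W \<bullet> W) - 3 * (\<Sum>j\<in>UNIV. (r $ j)\<^sup>2) - (\<Sum>j\<in>UNIV. e * (2 * r $ j + e))
        \<le> 2 * (W \<bullet> W) - (2 / t) * (G \<bullet> (N ** G)) - M \<bullet> M"
      by (simp add: GNG MM sum.distrib sum_distrib_left t_def)
    also have "\<dots> \<le> 2 * (W \<bullet> W) + (2 / t) * (Y \<bullet> (M ** Y) - 2 * (G \<bullet> Y)) - M \<bullet> M"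
      using mult_left_mono[OF quadratic_form_completion_lower_bound[OF M_sym MN psd, of G Y], of "2 / t"]
      by (simp add: t_def)
    also have "\<dots> = L_PSP X W M Y"
      by (simp add: L_PSP_inner_form inner_commute[of Y] inner_matrix_mult_left G_def t_def algebra_simps)
    finally show ?thesis .
  qed
  thus "ereal (2 * (W \<bullet> W) - 3 * (\<Sum>j\<in>UNIV. (r $ j)\<^sup>2) - (\<Sum>j\<in>UNIV. e * (2 * r $ j + e)))
      \<le> (SUP M. INF Y. ereal (L_PSP X W M Y))"
    by (intro SUP_upper2[of M] INF_greatest) auto
qed

end

lemma PSP_minimax_given_W:
  fixes X :: "real^'t^'n" and W :: "real^'n^'k"
  shows "let v = trace ((- (3 / real CARD('t) powr (2/3))) *\<^sub>R
                          psd_powr (W ** X ** transpose X ** transpose W) (2/3)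
                       + 2 *\<^sub>R (W ** transpose W))
        in (SUP M :: real^'k^'k. INF Y :: real^'t^'k. ereal (L_PSP X W M Y)) = ereal v
           \<and> (INF Y :: real^'t^'k. SUP M :: real^'k^'k. ereal (L_PSP X W M Y)) = ereal v"
proof -
  define t where "t = real CARD('t)"
  have t: "0 < t" by (simp add: t_def)
  have C: "W ** X ** transpose X ** transpose W = (W ** X) ** transpose (W ** X)"
    by (simp add: matrix_transpose_mul matrix_mul_assoc)
  obtain U d where U: "orthogonal_matrix U" and d: "\<forall>i. 0 \<le> d $ i"
    and gram_d: "(W ** X) ** transpose (W ** X) = U ** diag_mat d ** transpose U"
    and pow: "psd_powr ((W ** X) ** transpose (W ** X)) (2/3) = U ** diag_mat (\<chi> i. d $ i powr (2/3)) ** transpose U"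
    by (rule psd_powr_gram_matrix)
  define r where "r = (\<chi> j. (d $ j / t) powr (1/3))"
  have r_nonneg: "0 \<le> r $ j" for j by (simp add: r_def)
  have "d = (\<chi> j. t * r $ j ^ 3)"
    using d t by (simp add: vec_eq_iff r_def cube_powr_one_third)
  with gram_d have gram: "(W ** X) ** transpose (W ** X) = U ** diag_mat (\<chi> j. t * r $ j ^ 3) ** transpose U"
    by simp
  have r_sq: "(r $ j)\<^sup>2 = d $ j powr (2/3) / t powr (2/3)" for j
    using d t by (simp add: r_def powr_numeral[symmetric] powr_powr powr_divide)
  have "trace ((- (3 / t powr (2/3))) *\<^sub>R psd_powr (W ** X ** transpose X ** transpose W) (2/3)
      + 2 *\<^sub>R (W ** transpose W)) = 2 * (W \<bullet> W) - 3 * (\<Sum>j\<in>UNIV. (r $ j)\<^sup>2)"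
    by (simp add: C pow trace_add trace_sub trace_scaleR trace_orthogonal_conj_diag[OF U] r_sq
        trace_mul_sym[of W] trace_transpose_mult flip: sum_divide_distrib)
  with PSP_INF_SUP_le[OF U r_nonneg gram[unfolded t_def]] PSP_SUP_INF_ge[OF U r_nonneg gram[unfolded t_def]]
    SUP_INF_le_INF_SUP[of "\<lambda>M Y. ereal (L_PSP X W M Y)"]
  show ?thesis by (simp add: Let_def t_def) (meson antisym order_trans)
qed

theorem mainTheorem6:
  fixes X :: "real^'t^'n"
  assumes "CARD('k) \<le> CARD('n)"
  shows
   "(\<forall>Y :: real^'t^'k.
       (let v = (1 / real CARD('t)^2) * (frob_norm (transpose X ** X - transpose Y ** Y))^2
                - (1 / real CARD('t)^2) * (frob_norm (transpose X ** X))^2;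
            W0 = (1 / real CARD('t)) *\<^sub>R (Y ** transpose X);
            M0 = (1 / real CARD('t)) *\<^sub>R (Y ** transpose Y)
        in (INF W :: real^'n^'k. SUP M :: real^'k^'k. ereal (L_PSP X W M Y)) = ereal v
           \<and> (SUP M :: real^'k^'k. ereal (L_PSP X W0 M Y)) = ereal v
           \<and> L_PSP X W0 M0 Y = v))
    \<and>
    (\<forall>W :: real^'n^'k.
       (let v = trace ((- (3 / real CARD('t) powr (2/3))) *\<^sub>R
                          psd_powr (W ** X ** transpose X ** transpose W) (2/3)
                       + 2 *\<^sub>R (W ** transpose W))
        in (SUP M :: real^'k^'k. INF Y :: real^'t^'k. ereal (L_PSP X W M Y)) = ereal v
           \<and> (INF Y :: real^'t^'k. SUP M :: real^'k^'k. ereal (L_PSP X W M Y)) = ereal v))"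
  by (intro conjI allI PSP_minimax_given_Y PSP_minimax_given_W)

end
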